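(* Let $\phi\ge1$. Consider a knapsack instance with arbitrary profits $p_1,\ldots,p_n\in\mathbb{R}_{\ge0}$ in which each weight $w_i$ is chosen uniformly at random from an arbitrary interval $A_i\subseteq[0,1]$ of length $1/\phi$, independently of the other weights, and let $\mathcal{P}$ be the set of Pareto-optimal solutions. For $k\in\mathbb{N}$ and $i\in\{0,\ldots,k-1\}$ let $I_i^k=(ni/k,\,n(i+1)/k]$, call $I_i^k$ non-empty if there is $x\in\mathcal{P}$ with $w^{\mathsf T}x\in I_i^k$, and let $X^k$ be the number of non-empty intervals $I_i^k$ plus one. Then for every $k\in\mathbb{N}$, $\mathbb{E}[X^k]\le n^2\phi+1$.
   Context: Solutions are vectors $x\in\{0,1\}^n$. A solution $y$ dominates $x$ if $p^{\mathsf T}y\ge p^{\mathsf T}x$ and $w^{\mathsf T}y\le w^{\mathsf T}x$ with at least one inequality strict; $x$ is Pareto-optimal if no solution dominates it. *)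

theory Defs
  imports "HOL-Probability.Probability"
begin

text \<open>A solution x in {0,1}^n is encoded by its support S, a subset of {..<n};
  then p^T x = sum p S and w^T x = sum w S.\<close>

definition dominates :: "(nat \<Rightarrow> real) \<Rightarrow> (nat \<Rightarrow> real) \<Rightarrow> nat set \<Rightarrow> nat set \<Rightarrow> bool" where
  "dominates p w T S \<longleftrightarrow>
     sum p T \<ge> sum p S \<and> sum w T \<le> sum w S \<and> (sum p T > sum p S \<or> sum w T < sum w S)"

definition pareto_optimal :: "nat \<Rightarrow> (nat \<Rightarrow> real) \<Rightarrow> (nat \<Rightarrow> real) \<Rightarrow> nat set \<Rightarrow> bool" where
  "pareto_optimal n p w S \<longleftrightarrow>
     S \<subseteq> {..<n} \<and> \<not> (\<exists>T. T \<subseteq> {..<n} \<and> dominates p w T S)"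

definition pareto_set :: "nat \<Rightarrow> (nat \<Rightarrow> real) \<Rightarrow> (nat \<Rightarrow> real) \<Rightarrow> nat set set" where
  "pareto_set n p w = {S. pareto_optimal n p w S}"

definition Ik :: "nat \<Rightarrow> nat \<Rightarrow> nat \<Rightarrow> real set" where
  "Ik n k i = {real n * real i / real k <.. real n * (real i + 1) / real k}"

definition Xk :: "nat \<Rightarrow> (nat \<Rightarrow> real) \<Rightarrow> nat \<Rightarrow> (nat \<Rightarrow> real) \<Rightarrow> nat" where
  "Xk n p k w = card {i. i < k \<and> (\<exists>S \<in> pareto_set n p w. sum w S \<in> Ik n k i)} + 1"

definition weight_space :: "nat \<Rightarrow> (nat \<Rightarrow> real) \<Rightarrow> real \<Rightarrow> (nat \<Rightarrow> real) measure" where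
  "weight_space n a \<phi> = PiM {..<n} (\<lambda>i. uniform_measure lborel {a i .. a i + 1 / \<phi>})"

end

theory Submission
  imports Defs
begin

(* Fix a threshold t = n i / k and the gap e = n / k. If a Pareto-optimal solution S has weight
   in (t, t + e], let W be the most profitable solution of weight at most t. Then S is more
   profitable than W and heavier, so (weights being nonnegative) S contains an item j outside W.
   Consequently the j-loser, the lightest solution containing j that outprofits every solution
   of weight at most t avoiding j, has weight in (t, t + e]. The candidates for the j-loser do
   not depend on w_j, and each of them weighs w_j plus a quantity independent of w_j; so, for
   fixed other weights, this event confines w_j to an interval of length e, which has
   probability at most phi e. Summing over the k intervals and the n items gives
   E[X^k] <= 1 + k n phi (n / k) = n^2 phi + 1. *)

lemma sum_fun_upd_notin: "j \<notin> T \<Longrightarrow> sum (w(j := y)) T = sum w T"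
  by (intro sum.cong) auto

lemma sum_fun_upd_in:
  fixes w :: "'a \<Rightarrow> 'b::comm_monoid_add"
  assumes "finite T" "j \<in> T"
  shows "sum (w(j := y)) T = y + sum w (T - {j})"
  using assms by (simp add: sum.remove sum_fun_upd_notin)

lemma prob_space_uniform_Icc:
  fixes a b :: real
  assumes "a < b"
  shows "prob_space (uniform_measure lborel {a..b})"
  using assms by (intro prob_space_uniform_measure) auto

lemma emeasure_uniform_Icc_Ioc_le:
  fixes a b c d :: real
  assumes "a < b" "c \<le> d"
  shows "emeasure (uniform_measure lborel {a..b}) {c<..d} \<le> ennreal ((d - c) / (b - a))"
proof -
  have "emeasure (uniform_measure lborel {a..b}) {c<..d}
      = emeasure lborel ({a..b} \<inter> {c<..d}) / emeasure lborel {a..b}"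
    by simp
  also have "\<dots> \<le> emeasure lborel {c<..d} / emeasure lborel {a..b}"
    by (intro divide_right_mono_ennreal emeasure_mono) auto
  also have "\<dots> = ennreal ((d - c) / (b - a))"
    using assms by (simp add: divide_ennreal)
  finally show ?thesis .
qed

(* The principle of deferred decisions. *)
lemma emeasure_PiM_le_by_slices:
  fixes M :: "'i \<Rightarrow> 'a measure"
  assumes "finite I" "j \<in> I" "\<And>i. prob_space (M i)" "E \<in> sets (PiM I M)"
    and slices: "\<And>x. \<exists>B \<in> sets (M j). emeasure (M j) B \<le> \<delta> \<and>
                          (\<forall>y \<in> space (M j). x(j := y) \<in> E \<longrightarrow> y \<in> B)"
  shows "emeasure (PiM I M) E \<le> \<delta>"
proof -
  interpret product_sigma_finite M
    unfolding product_sigma_finite_def using assms(3) prob_space_imp_sigma_finite by blast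
  interpret rest: prob_space "PiM (I - {j}) M"
    using assms(3) by (rule prob_space_PiM)
  have I: "insert j (I - {j}) = I"
    using assms(2) by auto
  have "emeasure (PiM I M) E = (\<integral>\<^sup>+w. indicator E w \<partial>PiM (insert j (I - {j})) M)"
    unfolding I using assms(4) by simp
  also have "\<dots> = (\<integral>\<^sup>+x. (\<integral>\<^sup>+y. indicator E (x(j := y)) \<partial>M j) \<partial>PiM (I - {j}) M)"
    using assms by (intro product_nn_integral_insert) (auto simp: insert_absorb)
  also have "\<dots> \<le> (\<integral>\<^sup>+x. \<delta> \<partial>PiM (I - {j}) M)"
  proof (rule nn_integral_mono)
    fix x
    obtain B where B: "B \<in> sets (M j)" "emeasure (M j) B \<le> \<delta>"
      and slice: "\<And>y. y \<in> space (M j) \<Longrightarrow> x(j := y) \<in> E \<Longrightarrow> y \<in> B"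
      using slices by blast
    have "(\<integral>\<^sup>+y. indicator E (x(j := y)) \<partial>M j) \<le> (\<integral>\<^sup>+y. indicator B y \<partial>M j)"
      using slice by (intro nn_integral_mono) (auto split: split_indicator)
    also have "\<dots> \<le> \<delta>"
      using B by simp
    finally show "(\<integral>\<^sup>+y. indicator E (x(j := y)) \<partial>M j) \<le> \<delta>" .
  qed
  also have "\<dots> = \<delta>"
    by (simp add: rest.emeasure_space_1)
  finally show ?thesis .
qed

lemma borel_measurable_sum_components:
  fixes M :: "'i \<Rightarrow> real measure"
  assumes "T \<subseteq> I" "\<And>i. i \<in> I \<Longrightarrow> sets (M i) = sets borel"
  shows "(\<lambda>w. sum w T) \<in> borel_measurable (PiM I M)"
proof -
  have "(\<lambda>w. w i) \<in> borel_measurable (PiM I M)" if "i \<in> T" for i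
  proof -
    have "(\<lambda>w. w i) \<in> measurable (PiM I M) (M i)"
      using assms that by (intro measurable_component_singleton) auto
    then show ?thesis
      using assms that measurable_cong_sets[of "PiM I M" "PiM I M" "M i" borel] by auto
  qed
  then show ?thesis
    by (rule borel_measurable_sum[of T "\<lambda>i w. w i", simplified])
qed

definition outprofits_avoiding ::
    "nat \<Rightarrow> (nat \<Rightarrow> real) \<Rightarrow> (nat \<Rightarrow> real) \<Rightarrow> nat \<Rightarrow> real \<Rightarrow> nat set \<Rightarrow> bool" where
  "outprofits_avoiding n p w j t T \<longleftrightarrow>
     (\<forall>T' \<in> Pow {..<n}. j \<notin> T' \<and> sum w T' \<le> t \<longrightarrow> sum p T' < sum p T)"

(* The event that the j-loser (see above) for threshold t has weight in (t, t + e]. *)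
definition loser_in_gap ::
    "nat \<Rightarrow> (nat \<Rightarrow> real) \<Rightarrow> (nat \<Rightarrow> real) \<Rightarrow> nat \<Rightarrow> real \<Rightarrow> real \<Rightarrow> bool" where
  "loser_in_gap n p w j t e \<longleftrightarrow>
     (\<exists>T \<in> Pow {..<n}. j \<in> T \<and> outprofits_avoiding n p w j t T \<and> sum w T \<le> t + e) \<and>
     (\<forall>T \<in> Pow {..<n}. j \<in> T \<and> outprofits_avoiding n p w j t T \<longrightarrow> t < sum w T)"

lemma loser_in_gap_if_outprofits_winner:
  assumes W: "W \<subseteq> {..<n}" "sum w W \<le> t" "j \<notin> W"
    and W_max: "\<And>T. T \<subseteq> {..<n} \<Longrightarrow> sum w T \<le> t \<Longrightarrow> sum p T \<le> sum p W"
    and S: "S \<subseteq> {..<n}" "j \<in> S" "sum p W < sum p S" "sum w S \<in> {t<..t + e}"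
  shows "loser_in_gap n p w j t e"
proof -
  have "outprofits_avoiding n p w j t S"
    unfolding outprofits_avoiding_def
  proof (intro ballI impI)
    fix T assume "T \<in> Pow {..<n}" "j \<notin> T \<and> sum w T \<le> t"
    then have "sum p T \<le> sum p W"
      using W_max by auto
    then show "sum p T < sum p S"
      using S(3) by linarith
  qed
  moreover have "t < sum w T"
    if T: "T \<in> Pow {..<n}" "j \<in> T" "outprofits_avoiding n p w j t T" for T
  proof (rule ccontr)
    assume "\<not> t < sum w T"
    then have "sum p T \<le> sum p W"
      using T W_max by auto
    moreover have "sum p W < sum p T"
      using T W unfolding outprofits_avoiding_def by auto
    ultimately show False by linarith
  qed
  ultimately show ?thesis
    using S unfolding loser_in_gap_def by auto
qed

lemma pareto_weight_in_gap_imp_loser_in_gap: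
  assumes "0 \<le> t" and nonneg: "\<And>i. i < n \<Longrightarrow> 0 \<le> w i"
    and S: "S \<in> pareto_set n p w" and S_gap: "sum w S \<in> {t<..t + e}"
  obtains j where "j < n" and "loser_in_gap n p w j t e"
proof -
  have S_sub: "S \<subseteq> {..<n}" and undominated: "\<And>T. T \<subseteq> {..<n} \<Longrightarrow> \<not> dominates p w T S"
    using S unfolding pareto_set_def pareto_optimal_def by auto
  define light where "light = {T \<in> Pow {..<n}. sum w T \<le> t}"
  have "finite light" "{} \<in> light"
    using \<open>0 \<le> t\<close> unfolding light_def by auto
  then obtain W where W: "W \<in> light" and W_max: "\<And>T. T \<in> light \<Longrightarrow> sum p T \<le> sum p W"
    using ex_is_arg_min_if_finite[of light "\<lambda>T. - sum p T"]
    unfolding is_arg_min_linorder by fastforce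
  have "sum p W < sum p S"
  proof (rule ccontr)
    assume "\<not> ?thesis"
    then have "dominates p w W S"
      using W S_gap unfolding light_def dominates_def by auto
    then show False
      using undominated W unfolding light_def by auto
  qed
  have "\<not> S \<subseteq> W"
  proof
    assume "S \<subseteq> W"
    then have "sum w S \<le> sum w W"
      using W nonneg unfolding light_def by (intro sum_mono2) (auto intro: finite_subset)
    then show False
      using W S_gap unfolding light_def by auto
  qed
  then obtain j where "j \<in> S" "j \<notin> W" by blast
  then have "loser_in_gap n p w j t e"
    using W W_max S_sub S_gap \<open>sum p W < sum p S\<close> unfolding light_def
    by (intro loser_in_gap_if_outprofits_winner[of W]) auto
  moreover have "j < n"
    using S_sub \<open>j \<in> S\<close> by auto
  ultimately show ?thesis
    using that by blast
qed

lemma outprofits_avoiding_fun_upd: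
  "outprofits_avoiding n p (w(j := y)) j t T \<longleftrightarrow> outprofits_avoiding n p w j t T"
  unfolding outprofits_avoiding_def by (auto simp del: fun_upd_apply simp: sum_fun_upd_notin)

lemma loser_in_gap_fun_upd_in_Ioc:
  obtains c where "\<And>y. loser_in_gap n p (w(j := y)) j t e \<Longrightarrow> y \<in> {c<..c + e}"
proof (cases "\<exists>T \<in> Pow {..<n}. j \<in> T \<and> outprofits_avoiding n p w j t T")
  case False
  then show ?thesis
    using that unfolding loser_in_gap_def outprofits_avoiding_fun_upd by blast
next
  case True
  define candidates where "candidates = {T \<in> Pow {..<n}. j \<in> T \<and> outprofits_avoiding n p w j t T}"
  define rest where "rest T = sum w (T - {j})" for T
  have "finite candidates" "candidates \<noteq> {}"
    using True unfolding candidates_def by auto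
  then obtain T0 where T0: "T0 \<in> candidates" and T0_min: "\<And>T. T \<in> candidates \<Longrightarrow> rest T0 \<le> rest T"
    using ex_is_arg_min_if_finite[of candidates rest] unfolding is_arg_min_linorder by fastforce
  have weight: "sum (w(j := y)) T = y + rest T" if "T \<in> candidates" for T y
    using that finite_subset[of T "{..<n}"] unfolding candidates_def rest_def
    by (simp del: fun_upd_apply add: sum_fun_upd_in)
  have "y \<in> {t - rest T0<..t - rest T0 + e}" if "loser_in_gap n p (w(j := y)) j t e" for y
  proof -
    from that obtain T where T: "T \<in> candidates" "sum (w(j := y)) T \<le> t + e"
      unfolding loser_in_gap_def outprofits_avoiding_fun_upd candidates_def by blast
    from that have "t < sum (w(j := y)) T0"
      using T0 unfolding loser_in_gap_def outprofits_avoiding_fun_upd candidates_def by blast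
    then show ?thesis
      using T T0_min[OF T(1)] weight[OF T(1)] weight[OF T0] by auto
  qed
  then show ?thesis
    using that by blast
qed

lemma measurable_loser_in_gap:
  fixes M :: "nat \<Rightarrow> real measure"
  assumes "\<And>i. i < n \<Longrightarrow> sets (M i) = sets borel"
  shows "Measurable.pred (PiM {..<n} M) (\<lambda>w. loser_in_gap n p w j t e)"
proof -
  have [measurable]: "(\<lambda>w. sum w T) \<in> borel_measurable (PiM {..<n} M)" if "T \<in> Pow {..<n}" for T
    using that assms by (intro borel_measurable_sum_components) auto
  show ?thesis
    unfolding loser_in_gap_def outprofits_avoiding_def by measurable
qed

lemma emeasure_loser_in_gap_le:
  assumes "0 < \<phi>" "j < n" "0 \<le> e"
  shows "emeasure (weight_space n a \<phi>) {w \<in> space (weight_space n a \<phi>). loser_in_gap n p w j t e}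
           \<le> ennreal (\<phi> * e)"
  unfolding weight_space_def
proof (rule emeasure_PiM_le_by_slices)
  show "prob_space (uniform_measure lborel {a i..a i + 1 / \<phi>})" for i
    using assms by (intro prob_space_uniform_Icc) simp
  show "{w \<in> space (PiM {..<n} (\<lambda>i. uniform_measure lborel {a i..a i + 1 / \<phi>})).
          loser_in_gap n p w j t e} \<in> sets (PiM {..<n} (\<lambda>i. uniform_measure lborel {a i..a i + 1 / \<phi>}))"
    by (rule measurable_loser_in_gap[unfolded pred_def]) simp
  fix x :: "nat \<Rightarrow> real"
  obtain c where c: "\<And>y. loser_in_gap n p (x(j := y)) j t e \<Longrightarrow> y \<in> {c<..c + e}"
    using loser_in_gap_fun_upd_in_Ioc by blast
  have "emeasure (uniform_measure lborel {a j..a j + 1 / \<phi>}) {c<..c + e} \<le> ennreal (\<phi> * e)"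
    using emeasure_uniform_Icc_Ioc_le[of "a j" "a j + 1 / \<phi>" c "c + e"] assms by (simp add: mult.commute)
  then show "\<exists>B \<in> sets (uniform_measure lborel {a j..a j + 1 / \<phi>}).
      emeasure (uniform_measure lborel {a j..a j + 1 / \<phi>}) B \<le> ennreal (\<phi> * e) \<and>
      (\<forall>y \<in> space (uniform_measure lborel {a j..a j + 1 / \<phi>}).
         x(j := y) \<in> {w \<in> space (PiM {..<n} (\<lambda>i. uniform_measure lborel {a i..a i + 1 / \<phi>})).
                         loser_in_gap n p w j t e} \<longrightarrow> y \<in> B)"
    using c by (intro bexI[of _ "{c<..c + e}"]) auto
qed (use assms in auto)

lemma AE_weight_space_nonneg:
  assumes "0 < \<phi>" "\<And>i. i < n \<Longrightarrow> 0 \<le> a i"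
  shows "AE w in weight_space n a \<phi>. \<forall>i \<in> {..<n}. 0 \<le> w i"
  unfolding weight_space_def
proof (intro AE_finite_allI AE_PiM_component)
  fix i assume "i \<in> {..<n}"
  show "AE x in uniform_measure lborel {a i..a i + 1 / \<phi>}. 0 \<le> x"
    using assms(2)[of i] \<open>i \<in> {..<n}\<close> by (intro AE_uniform_measureI AE_I2) auto
qed (use assms(1) prob_space_uniform_Icc in auto)

lemma Ik_eq_Ioc: "Ik n k i = {real n * real i / real k <.. real n * real i / real k + real n / real k}"
  unfolding Ik_def by (simp add: distrib_left add_divide_distrib)

lemma Xk_le_loser_count:
  assumes "\<And>i. i < n \<Longrightarrow> 0 \<le> w i"
  shows "ennreal (real (Xk n p k w)) \<le> 1 + (\<Sum>i<k. \<Sum>j<n.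
           indicator {w. loser_in_gap n p w j (real n * real i / real k) (real n / real k)} w)"
proof -
  define losers where "losers i = (\<Sum>j<n.
      indicator {w. loser_in_gap n p w j (real n * real i / real k) (real n / real k)} w :: ennreal)" for i
  define nonempty where "nonempty = {i. i < k \<and> (\<exists>S \<in> pareto_set n p w. sum w S \<in> Ik n k i)}"
  have "1 \<le> losers i" if i: "i \<in> nonempty" for i
  proof -
    obtain S where "S \<in> pareto_set n p w" "sum w S \<in> Ik n k i"
      using i unfolding nonempty_def by blast
    moreover have "0 \<le> real n * real i / real k"
      by simp
    ultimately obtain j where "j < n" "loser_in_gap n p w j (real n * real i / real k) (real n / real k)"
      using pareto_weight_in_gap_imp_loser_in_gap[of _ n w] assms unfolding Ik_eq_Ioc by blast
    then show ?thesis
      unfolding losers_def by (intro order_trans[OF _ member_le_sum[of j]]) auto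
  qed
  then have "of_nat (card nonempty) \<le> (\<Sum>i\<in>nonempty. losers i)"
    using sum_mono[of nonempty "\<lambda>_. 1 :: ennreal" losers] by simp
  also have "\<dots> \<le> (\<Sum>i<k. losers i)"
    unfolding nonempty_def by (intro sum_mono2) auto
  finally show ?thesis
    unfolding Xk_def losers_def nonempty_def
    by (simp add: ennreal_of_nat_eq_real_of_nat add.commute add_left_mono)
qed

lemma nn_integral_Xk_le_sum_loser_probabilities:
  assumes "0 < \<phi>" "\<And>i. i < n \<Longrightarrow> 0 \<le> a i"
  shows "(\<integral>\<^sup>+w. ennreal (real (Xk n p k w)) \<partial>weight_space n a \<phi>)
     \<le> 1 + (\<Sum>i<k. \<Sum>j<n. emeasure (weight_space n a \<phi>) {w \<in> space (weight_space n a \<phi>).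
             loser_in_gap n p w j (real n * real i / real k) (real n / real k)})"
proof -
  let ?W = "weight_space n a \<phi>"
  let ?L = "\<lambda>i j w. loser_in_gap n p w j (real n * real i / real k) (real n / real k)"
  interpret prob_space ?W
    unfolding weight_space_def using assms(1) by (intro prob_space_PiM prob_space_uniform_Icc) simp
  have [measurable]: "Measurable.pred ?W (?L i j)" for i j
    unfolding weight_space_def by (rule measurable_loser_in_gap) simp
  have "AE w in ?W. ennreal (real (Xk n p k w)) \<le> 1 + (\<Sum>i<k. \<Sum>j<n. indicator {w. ?L i j w} w)"
  proof -
    have "AE w in ?W. \<forall>i \<in> {..<n}. 0 \<le> w i"
      using assms by (rule AE_weight_space_nonneg)
    then show ?thesis
      by eventually_elim (rule Xk_le_loser_count, simp)
  qed
  then have "(\<integral>\<^sup>+w. ennreal (real (Xk n p k w)) \<partial>?W)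
      \<le> (\<integral>\<^sup>+w. 1 + (\<Sum>i<k. \<Sum>j<n. indicator {w. ?L i j w} w) \<partial>?W)"
    by (rule nn_integral_mono_AE)
  also have "\<dots> = 1 + (\<Sum>i<k. \<Sum>j<n. \<integral>\<^sup>+w. indicator {w. ?L i j w} w \<partial>?W)"
    by (simp add: nn_integral_add nn_integral_sum emeasure_space_1)
  also have "\<dots> = 1 + (\<Sum>i<k. \<Sum>j<n. emeasure ?W {w \<in> space ?W. ?L i j w})"
    by (simp add: nn_integral_indicator' Collect_conj_eq Int_commute)
  finally show ?thesis .
qed

theorem lemma2p5:
  fixes n k :: nat and \<phi> :: real and p a :: "nat \<Rightarrow> real"
  assumes "\<phi> \<ge> 1"
    and "\<And>i. i < n \<Longrightarrow> p i \<ge> 0"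
    and "\<And>i. i < n \<Longrightarrow> 0 \<le> a i \<and> a i + 1 / \<phi> \<le> 1"
  shows "(\<integral>\<^sup>+ w. ennreal (real (Xk n p k w)) \<partial>(weight_space n a \<phi>))
           \<le> ennreal (real n ^ 2 * \<phi> + 1)"
proof -
  have "0 < \<phi>"
    using assms(1) by simp
  have "(\<integral>\<^sup>+ w. ennreal (real (Xk n p k w)) \<partial>(weight_space n a \<phi>))
      \<le> 1 + (\<Sum>i<k. \<Sum>j<n. emeasure (weight_space n a \<phi>) {w \<in> space (weight_space n a \<phi>).
                loser_in_gap n p w j (real n * real i / real k) (real n / real k)})"
    using \<open>0 < \<phi>\<close> assms(3) by (intro nn_integral_Xk_le_sum_loser_probabilities) auto
  also have "\<dots> \<le> 1 + (\<Sum>i<k. \<Sum>j<n. ennreal (\<phi> * (real n / real k)))"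
    using \<open>0 < \<phi>\<close> by (intro add_left_mono sum_mono emeasure_loser_in_gap_le) auto
  also have "\<dots> \<le> ennreal (real n ^ 2 * \<phi> + 1)"
  proof (cases "k = 0")
    case False
    then have "(\<Sum>i<k. \<Sum>j<n. \<phi> * (real n / real k)) = real n ^ 2 * \<phi>"
      by (simp add: power2_eq_square)
    then show ?thesis
      using \<open>0 < \<phi>\<close> by (simp del: sum_constant add: add.commute sum_nonneg)
  qed (use \<open>0 < \<phi>\<close> in simp)
  finally show ?thesis .
qed

end
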